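(* Let $\mathcal{P}$ be a process LTS and $\mathcal{E}$ an environment LTS over the same action set $A$. (i) $\sim_e\ \subseteq\ \sim^{ji}_e$ for every environment $e$. (ii) If $A$ contains two distinct actions $a,b$ and there are states $x,y$ occurring both as processes and as environments with (up to isomorphism of reachable parts) $y$ having exactly the transitions $y\xrightarrow{a}y_1\xrightarrow{b}y_2$, and $x$ having exactly the transitions $x\xrightarrow{a}x_1\xrightarrow{b}x_2$ and $x\xrightarrow{a}x_3$, where $x_2,x_3,y_2$ have no transitions (i.e. $y=a.b$ and $x=a.b+a$), then there is an environment $e$ with $\sim_e\ \subsetneq\ \sim^{ji}_e$ (namely $e=x$, with $y\sim^{ji}_e x$ but not $y\sim_e x$). (iii) $\sim^{ji}_e\ \subseteq\ \simeq^{ji}_e$ for every environment $e$. (iv) Under the same proviso as in (ii), there is an environment $g$ with $\sim^{ji}_g\ \subsetneq\ \simeq^{ji}_g$ (namely $g=y$, with $y\simeq^{ji}_g x$ but not $y\sim^{ji}_g x$).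
   Context: A labeled transition system (LTS) is a triple $\langle \mathrm{St},A,\to\rangle$ with states, actions, and transitions $s\xrightarrow{a}t$. A process LTS $\mathcal{P}=\langle \mathrm{Pr},A,\to\rangle$ has states called processes; an environment LTS $\mathcal{E}=\langle\mathrm{Env},A,\Rightarrow\rangle$ has states called environments, transitions $e\xRightarrow{a}e'$. A simulation is a nonempty relation $S$ on states such that $s\,S\,t$ and $s\xrightarrow{a}s'$ imply some $t\xrightarrow{a}t'$ with $s'\,S\,t'$; a bisimulation is a relation $B$ such that $B$ and its converse are simulations; $\le$ and $\sim$ denote simulatability and bisimilarity (existence of a simulation, resp. bisimulation, relating the states). An $\mathcal{E}$-parameterized bisimulation is a family $(B_f)_{f\in\mathrm{Env}}$ of nonempty relations on $\mathrm{Pr}$ such that whenever $p\,B_e\,q$ and $e\xRightarrow{a}e'$: every $p\xrightarrow{a}p'$ is matched by some $q\xrightarrow{a}q'$ with $p'\,B_{e'}\,q'$, and every $q\xrightarrow{a}q'$ by some $p\xrightarrow{a}p'$ with $p'\,B_{e'}\,q'$. $p\sim_e q$ iff some such family has $p\,B_e\,q$. The join LTS $\mathcal{P}\mathbin{\&}\mathcal{E}$ has states $p\mathbin{\&}e$ and transitions $p\mathbin{\&}e\xrightarrow{a}p'\mathbin{\&}e'$ iff $p\xrightarrow{a}p'$ and $e\xRightarrow{a}e'$. $p\le^{ji}_e q$ iff $p\mathbin{\&}e\le q\mathbin{\&}e$; $p\sim^{ji}_e q$ iff $p\mathbin{\&}e\sim q\mathbin{\&}e$; $p\simeq^{ji}_e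 q$ iff $p\le^{ji}_e q$ and $q\le^{ji}_e p$. *)

theory Defs
  imports Main
begin

text \<open>An LTS is represented by its transition predicate T s a t (s --a--> t).\<close>

definition simulation :: "('s \<Rightarrow> 'a \<Rightarrow> 's \<Rightarrow> bool) \<Rightarrow> ('s \<Rightarrow> 's \<Rightarrow> bool) \<Rightarrow> bool" where
  "simulation T S \<longleftrightarrow> (\<exists>s t. S s t) \<and>
     (\<forall>s t a s'. S s t \<and> T s a s' \<longrightarrow> (\<exists>t'. T t a t' \<and> S s' t'))"

definition bisimulation :: "('s \<Rightarrow> 'a \<Rightarrow> 's \<Rightarrow> bool) \<Rightarrow> ('s \<Rightarrow> 's \<Rightarrow> bool) \<Rightarrow> bool" where
  "bisimulation T B \<longleftrightarrow> simulation T B \<and> simulation T (conversep B)"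

definition simulatable :: "('s \<Rightarrow> 'a \<Rightarrow> 's \<Rightarrow> bool) \<Rightarrow> 's \<Rightarrow> 's \<Rightarrow> bool" where
  "simulatable T s t \<longleftrightarrow> (\<exists>S. simulation T S \<and> S s t)"

definition bisimilar :: "('s \<Rightarrow> 'a \<Rightarrow> 's \<Rightarrow> bool) \<Rightarrow> 's \<Rightarrow> 's \<Rightarrow> bool" where
  "bisimilar T s t \<longleftrightarrow> (\<exists>B. bisimulation T B \<and> B s t)"

definition param_bisimulation ::
  "('p \<Rightarrow> 'a \<Rightarrow> 'p \<Rightarrow> bool) \<Rightarrow> ('e \<Rightarrow> 'a \<Rightarrow> 'e \<Rightarrow> bool) \<Rightarrow> ('e \<Rightarrow> 'p \<Rightarrow> 'p \<Rightarrow> bool) \<Rightarrow> bool" where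
  "param_bisimulation TP TE B \<longleftrightarrow> (\<forall>f. \<exists>p q. B f p q) \<and>
     (\<forall>e p q a e'. B e p q \<and> TE e a e' \<longrightarrow>
        (\<forall>p'. TP p a p' \<longrightarrow> (\<exists>q'. TP q a q' \<and> B e' p' q')) \<and>
        (\<forall>q'. TP q a q' \<longrightarrow> (\<exists>p'. TP p a p' \<and> B e' p' q')))"

definition param_bisimilar ::
  "('p \<Rightarrow> 'a \<Rightarrow> 'p \<Rightarrow> bool) \<Rightarrow> ('e \<Rightarrow> 'a \<Rightarrow> 'e \<Rightarrow> bool) \<Rightarrow> 'e \<Rightarrow> 'p \<Rightarrow> 'p \<Rightarrow> bool" where
  "param_bisimilar TP TE e p q \<longleftrightarrow> (\<exists>B. param_bisimulation TP TE B \<and> B e p q)"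

definition join :: "('p \<Rightarrow> 'a \<Rightarrow> 'p \<Rightarrow> bool) \<Rightarrow> ('e \<Rightarrow> 'a \<Rightarrow> 'e \<Rightarrow> bool) \<Rightarrow> ('p \<times> 'e) \<Rightarrow> 'a \<Rightarrow> ('p \<times> 'e) \<Rightarrow> bool" where
  "join TP TE s a s' \<longleftrightarrow> TP (fst s) a (fst s') \<and> TE (snd s) a (snd s')"

definition ji_sim :: "('p \<Rightarrow> 'a \<Rightarrow> 'p \<Rightarrow> bool) \<Rightarrow> ('e \<Rightarrow> 'a \<Rightarrow> 'e \<Rightarrow> bool) \<Rightarrow> 'e \<Rightarrow> 'p \<Rightarrow> 'p \<Rightarrow> bool" where
  "ji_sim TP TE e p q \<longleftrightarrow> simulatable (join TP TE) (p, e) (q, e)"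

definition ji_bisim :: "('p \<Rightarrow> 'a \<Rightarrow> 'p \<Rightarrow> bool) \<Rightarrow> ('e \<Rightarrow> 'a \<Rightarrow> 'e \<Rightarrow> bool) \<Rightarrow> 'e \<Rightarrow> 'p \<Rightarrow> 'p \<Rightarrow> bool" where
  "ji_bisim TP TE e p q \<longleftrightarrow> bisimilar (join TP TE) (p, e) (q, e)"

definition ji_simeq :: "('p \<Rightarrow> 'a \<Rightarrow> 'p \<Rightarrow> bool) \<Rightarrow> ('e \<Rightarrow> 'a \<Rightarrow> 'e \<Rightarrow> bool) \<Rightarrow> 'e \<Rightarrow> 'p \<Rightarrow> 'p \<Rightarrow> bool" where
  "ji_simeq TP TE e p q \<longleftrightarrow> ji_sim TP TE e p q \<and> ji_sim TP TE e q p"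

definition is_ab :: "('s \<Rightarrow> 'a \<Rightarrow> 's \<Rightarrow> bool) \<Rightarrow> 'a \<Rightarrow> 'a \<Rightarrow> 's \<Rightarrow> bool" where
  "is_ab T a b s \<longleftrightarrow> (\<exists>s1 s2.
     (\<forall>c t. T s c t \<longleftrightarrow> c = a \<and> t = s1) \<and>
     (\<forall>c t. T s1 c t \<longleftrightarrow> c = b \<and> t = s2) \<and>
     (\<forall>c t. \<not> T s2 c t))"

definition is_ab_plus_a :: "('s \<Rightarrow> 'a \<Rightarrow> 's \<Rightarrow> bool) \<Rightarrow> 'a \<Rightarrow> 'a \<Rightarrow> 's \<Rightarrow> bool" where
  "is_ab_plus_a T a b s \<longleftrightarrow> (\<exists>s1 s2 s3.
     (\<forall>c t. T s c t \<longleftrightarrow> c = a \<and> (t = s1 \<or> t = s3)) \<and>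
     (\<forall>c t. T s1 c t \<longleftrightarrow> c = b \<and> t = s2) \<and>
     (\<forall>c t. \<not> T s2 c t) \<and>
     (\<forall>c t. \<not> T s3 c t))"

end

theory Submission
  imports Defs
begin

(* Restricting a parameterised bisimulation B to pairs with a common environment, (p, e) related to
   (q, e) iff B e p q, gives a bisimulation of the join; and a bisimulation of the join consists of
   two mutually inverse simulations. This gives (i) and (iii).
   For (ii), in the environment a.b + a both processes can move into the dead branch of the
   environment, which answers the move of a.b + a to its dead a-successor, so a.b and a.b + a are
   join-bisimilar. A parameterised bisimulation must answer that process move along the live branch
   of the environment as well, where a.b can continue with b and the dead successor cannot.
   For (iv), a.b and a.b + a simulate each other already as processes, hence in every environment.
   In the environment a.b, however, the joint move of a.b + a to its dead a-successor can only be
   answered by a.b moving to a state that can still do b together with the environment. *)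

definition stuck :: "('s \<Rightarrow> 'a \<Rightarrow> 's \<Rightarrow> bool) \<Rightarrow> 's \<Rightarrow> bool" where
  "stuck T s \<longleftrightarrow> (\<forall>a t. \<not> T s a t)"

lemma simulation_step:
  assumes "simulation T S" "S s t" "T s a s'"
  obtains t' where "T t a t'" "S s' t'"
  using assms unfolding simulation_def by blast

lemma bisimulation_conversep_iff: "bisimulation T (conversep B) \<longleftrightarrow> bisimulation T B"
  unfolding bisimulation_def by auto

lemma bisimilar_sym: "bisimilar T s t \<Longrightarrow> bisimilar T t s"
  unfolding bisimilar_def by (metis bisimulation_conversep_iff conversep_iff)

lemma bisimilar_imp_simulatable: "bisimilar T s t \<Longrightarrow> simulatable T s t"
  unfolding bisimilar_def bisimulation_def simulatable_def by blast

lemma bisimilar_step: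
  assumes "bisimilar T s t" "T s a s'"
  obtains t' where "T t a t'" "bisimilar T s' t'"
  using assms unfolding bisimilar_def bisimulation_def by (meson simulation_step)

lemma simulatable_intro:
  assumes "\<And>a s'. T s a s' \<Longrightarrow> \<exists>t'. T t a t' \<and> simulatable T s' t'"
  shows "simulatable T s t"
proof -
  have "simulation T (\<lambda>u v. (u = s \<and> v = t) \<or> simulatable T u v)"
    unfolding simulation_def
  proof (intro conjI allI impI)
    fix u v a u'
    assume "((u = s \<and> v = t) \<or> simulatable T u v) \<and> T u a u'"
    then show "\<exists>v'. T v a v' \<and> ((u' = s \<and> v' = t) \<or> simulatable T u' v')"
      using assms unfolding simulatable_def by (blast elim: simulation_step)
  qed blast
  then show ?thesis unfolding simulatable_def by blast
qed

lemma simulation_pair_sup_bisimilar: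
  assumes "\<And>a s'. T s a s' \<Longrightarrow> \<exists>t'. T t a t' \<and> bisimilar T s' t'"
  shows "simulation T (\<lambda>u v. (u = s \<and> v = t) \<or> bisimilar T u v)"
  unfolding simulation_def
proof (intro conjI allI impI)
  fix u v a u'
  assume "((u = s \<and> v = t) \<or> bisimilar T u v) \<and> T u a u'"
  then show "\<exists>v'. T v a v' \<and> ((u' = s \<and> v' = t) \<or> bisimilar T u' v')"
    using assms by (blast elim: bisimilar_step)
qed blast

lemma bisimilar_intro:
  assumes "\<And>a s'. T s a s' \<Longrightarrow> \<exists>t'. T t a t' \<and> bisimilar T s' t'"
    and "\<And>a t'. T t a t' \<Longrightarrow> \<exists>s'. T s a s' \<and> bisimilar T s' t'"
  shows "bisimilar T s t"
proof -
  define B where "B u v \<longleftrightarrow> (u = s \<and> v = t) \<or> bisimilar T u v" for u v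
  have "simulation T B"
    unfolding B_def by (rule simulation_pair_sup_bisimilar) (fact assms(1))
  moreover have "conversep B = (\<lambda>u v. (u = t \<and> v = s) \<or> bisimilar T u v)"
    unfolding B_def by (auto intro: bisimilar_sym)
  moreover have "simulation T (\<lambda>u v. (u = t \<and> v = s) \<or> bisimilar T u v)"
    using assms(2) by (intro simulation_pair_sup_bisimilar) (blast intro: bisimilar_sym)
  ultimately show ?thesis unfolding bisimilar_def bisimulation_def B_def by auto
qed

lemma stuck_simulatable: "stuck T s \<Longrightarrow> simulatable T s t"
  by (rule simulatable_intro) (simp add: stuck_def)

lemma stuck_bisimilar: "stuck T s \<Longrightarrow> stuck T t \<Longrightarrow> bisimilar T s t"
  by (rule bisimilar_intro) (simp_all add: stuck_def)

definition join_rel :: "('e \<Rightarrow> 'p \<Rightarrow> 'p \<Rightarrow> bool) \<Rightarrow> 'p \<times> 'e \<Rightarrow> 'p \<times> 'e \<Rightarrow> bool" where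
  "join_rel B s t \<longleftrightarrow> snd s = snd t \<and> B (snd s) (fst s) (fst t)"

lemma conversep_join_rel: "conversep (join_rel B) = join_rel (\<lambda>e. conversep (B e))"
  unfolding join_rel_def by (auto simp: fun_eq_iff)

lemma stuck_join_Pair: "stuck TP p \<or> stuck TE e \<Longrightarrow> stuck (join TP TE) (p, e)"
  unfolding stuck_def join_def by auto

lemma param_bisimulation_conversep:
  "param_bisimulation TP TE B \<Longrightarrow> param_bisimulation TP TE (\<lambda>e. conversep (B e))"
  unfolding param_bisimulation_def conversep_iff by blast

lemma param_bisimulation_step:
  assumes "param_bisimulation TP TE B" "B e p q" "TE e a e'" "TP p a p'"
  obtains q' where "TP q a q'" "B e' p' q'"
  using assms unfolding param_bisimulation_def by blast

lemma param_bisimilar_sym: "param_bisimilar TP TE e p q \<Longrightarrow> param_bisimilar TP TE e q p"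
  unfolding param_bisimilar_def using param_bisimulation_conversep by fastforce

lemma param_bisimilar_step:
  assumes "param_bisimilar TP TE e p q" "TE e a e'" "TP p a p'"
  obtains q' where "TP q a q'" "param_bisimilar TP TE e' p' q'"
  using assms unfolding param_bisimilar_def by (blast elim: param_bisimulation_step)

lemma param_bisimulation_join_simulation:
  assumes "param_bisimulation TP TE B"
  shows "simulation (join TP TE) (join_rel B)"
  unfolding simulation_def
proof (intro conjI allI impI)
  obtain p q where "B undefined p q"
    using assms unfolding param_bisimulation_def by blast
  then show "\<exists>s t. join_rel B s t"
    by (intro exI[of _ "(p, undefined)"] exI[of _ "(q, undefined)"]) (simp add: join_rel_def)
next
  fix s t a s'
  assume "join_rel B s t \<and> join TP TE s a s'"
  then have env: "snd t = snd s" "TE (snd s) a (snd s')"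
    and B: "B (snd s) (fst s) (fst t)" and move: "TP (fst s) a (fst s')"
    unfolding join_rel_def join_def by auto
  obtain q' where "TP (fst t) a q'" "B (snd s') (fst s') q'"
    by (rule param_bisimulation_step[OF assms B env(2) move])
  with env show "\<exists>t'. join TP TE t a t' \<and> join_rel B s' t'"
    by (intro exI[of _ "(q', snd s')"]) (simp add: join_rel_def join_def)
qed

lemma param_bisimulation_join_bisimulation:
  "param_bisimulation TP TE B \<Longrightarrow> bisimulation (join TP TE) (join_rel B)"
  unfolding bisimulation_def conversep_join_rel
  by (simp add: param_bisimulation_join_simulation param_bisimulation_conversep)

lemma param_bisimilar_imp_ji_bisim: "param_bisimilar TP TE e p q \<Longrightarrow> ji_bisim TP TE e p q"
  unfolding param_bisimilar_def ji_bisim_def bisimilar_def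
  using param_bisimulation_join_bisimulation by (fastforce simp: join_rel_def)

lemma ji_bisim_imp_ji_simeq: "ji_bisim TP TE e p q \<Longrightarrow> ji_simeq TP TE e p q"
  unfolding ji_simeq_def ji_sim_def ji_bisim_def by (blast intro: bisimilar_imp_simulatable bisimilar_sym)

lemma simulation_join_rel_const:
  fixes TE :: "'e \<Rightarrow> 'a \<Rightarrow> 'e \<Rightarrow> bool"
  assumes "simulation TP S"
  shows "simulation (join TP TE) (join_rel (\<lambda>_ :: 'e. S))"
  unfolding simulation_def
proof (intro conjI allI impI)
  obtain p q where "S p q"
    using assms unfolding simulation_def by blast
  then show "\<exists>s t. join_rel (\<lambda>_ :: 'e. S) s t"
    by (intro exI[of _ "(p, undefined)"] exI[of _ "(q, undefined)"]) (simp add: join_rel_def)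
next
  fix s t a s'
  assume "join_rel (\<lambda>_ :: 'e. S) s t \<and> join TP TE s a s'"
  then have env: "snd t = snd s" "TE (snd s) a (snd s')"
    and S: "S (fst s) (fst t)" and move: "TP (fst s) a (fst s')"
    unfolding join_rel_def join_def by auto
  obtain q' where "TP (fst t) a q'" "S (fst s') q'"
    by (rule simulation_step[OF assms S move])
  with env show "\<exists>t'. join TP TE t a t' \<and> join_rel (\<lambda>_ :: 'e. S) s' t'"
    by (intro exI[of _ "(q', snd s')"]) (simp add: join_rel_def join_def)
qed

lemma simulatable_imp_ji_sim: "simulatable TP p q \<Longrightarrow> ji_sim TP TE e p q"
  unfolding simulatable_def ji_sim_def
  using simulation_join_rel_const by (fastforce simp: join_rel_def)

lemma bisimilar_imp_ji_bisim:
  fixes TE :: "'e \<Rightarrow> 'a \<Rightarrow> 'e \<Rightarrow> bool"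
  assumes "bisimilar TP p q"
  shows "ji_bisim TP TE e p q"
proof -
  obtain B where "bisimulation TP B" "B p q"
    using assms unfolding bisimilar_def by blast
  then have "bisimulation (join TP TE) (join_rel (\<lambda>_ :: 'e. B))"
    unfolding bisimulation_def conversep_join_rel by (simp add: simulation_join_rel_const)
  with \<open>B p q\<close> show ?thesis
    unfolding ji_bisim_def bisimilar_def
    by (intro exI[of _ "join_rel (\<lambda>_ :: 'e. B)"]) (simp add: join_rel_def)
qed

lemma is_abE:
  assumes "is_ab T a b s"
  obtains s1 s2 where "\<forall>c t. T s c t \<longleftrightarrow> c = a \<and> t = s1" "\<forall>c t. T s1 c t \<longleftrightarrow> c = b \<and> t = s2"
    "stuck T s2"
  using assms unfolding is_ab_def stuck_def by blast

lemma is_ab_plus_aE: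
  assumes "is_ab_plus_a T a b s"
  obtains s1 s2 s3 where "\<forall>c t. T s c t \<longleftrightarrow> c = a \<and> (t = s1 \<or> t = s3)"
    "\<forall>c t. T s1 c t \<longleftrightarrow> c = b \<and> t = s2" "stuck T s2" "stuck T s3"
  using assms unfolding is_ab_plus_a_def stuck_def by blast

lemma ab_simulatable_ab_plus_a:
  assumes "is_ab T a b y" "is_ab_plus_a T a b x"
  shows "simulatable T y x"
proof -
  obtain y1 y2 where y: "\<forall>c t. T y c t \<longleftrightarrow> c = a \<and> t = y1" "\<forall>c t. T y1 c t \<longleftrightarrow> c = b \<and> t = y2"
    "stuck T y2"
    using assms(1) by (rule is_abE)
  obtain x1 x2 x3 where x: "\<forall>c t. T x c t \<longleftrightarrow> c = a \<and> (t = x1 \<or> t = x3)"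
    "\<forall>c t. T x1 c t \<longleftrightarrow> c = b \<and> t = x2" "stuck T x2" "stuck T x3"
    using assms(2) by (rule is_ab_plus_aE)
  have "simulatable T y1 x1"
    by (rule simulatable_intro) (simp add: x y stuck_simulatable)
  then show ?thesis
    by (intro simulatable_intro) (auto simp: x y)
qed

lemma ab_plus_a_simulatable_ab:
  assumes "is_ab_plus_a T a b x" "is_ab T a b y"
  shows "simulatable T x y"
proof -
  obtain x1 x2 x3 where x: "\<forall>c t. T x c t \<longleftrightarrow> c = a \<and> (t = x1 \<or> t = x3)"
    "\<forall>c t. T x1 c t \<longleftrightarrow> c = b \<and> t = x2" "stuck T x2" "stuck T x3"
    using assms(1) by (rule is_ab_plus_aE)
  obtain y1 y2 where y: "\<forall>c t. T y c t \<longleftrightarrow> c = a \<and> t = y1" "\<forall>c t. T y1 c t \<longleftrightarrow> c = b \<and> t = y2"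
    "stuck T y2"
    using assms(2) by (rule is_abE)
  have "simulatable T x1 y1"
    by (rule simulatable_intro) (simp add: x y stuck_simulatable)
  then show ?thesis
    by (intro simulatable_intro) (auto simp: x y stuck_simulatable)
qed

lemma ab_ji_bisim_ab_plus_a:
  assumes "is_ab TP a b y" "is_ab_plus_a TP a b x" "is_ab_plus_a TE a b e"
  shows "ji_bisim TP TE e y x"
proof -
  obtain y1 y2 where y: "\<forall>c t. TP y c t \<longleftrightarrow> c = a \<and> t = y1" "\<forall>c t. TP y1 c t \<longleftrightarrow> c = b \<and> t = y2"
    "stuck TP y2"
    using assms(1) by (rule is_abE)
  obtain x1 x2 x3 where x: "\<forall>c t. TP x c t \<longleftrightarrow> c = a \<and> (t = x1 \<or> t = x3)"
    "\<forall>c t. TP x1 c t \<longleftrightarrow> c = b \<and> t = x2" "stuck TP x2" "stuck TP x3"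
    using assms(2) by (rule is_ab_plus_aE)
  obtain e1 e2 e3 where e: "\<forall>c t. TE e c t \<longleftrightarrow> c = a \<and> (t = e1 \<or> t = e3)"
    "\<forall>c t. TE e1 c t \<longleftrightarrow> c = b \<and> t = e2" "stuck TE e2" "stuck TE e3"
    using assms(3) by (rule is_ab_plus_aE)
  let ?J = "join TP TE"
  have dead: "bisimilar ?J (y1, e3) (x3, e3)"
    by (simp add: stuck_bisimilar stuck_join_Pair x e)
  have "bisimilar TP y1 x1"
    by (rule bisimilar_intro) (simp_all add: x y stuck_bisimilar)
  then have live: "bisimilar ?J (y1, e1) (x1, e1)"
    unfolding ji_bisim_def[symmetric] by (rule bisimilar_imp_ji_bisim)
  show ?thesis
    unfolding ji_bisim_def
  proof (rule bisimilar_intro)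
    fix c s'
    assume "?J (y, e) c s'"
    then have "c = a" "s' = (y1, e1) \<or> s' = (y1, e3)"
      using y e by (auto simp: join_def prod_eq_iff)
    then show "\<exists>t'. ?J (x, e) c t' \<and> bisimilar ?J s' t'"
      using x e dead live by (auto simp: join_def)
  next
    fix c t'
    assume "?J (x, e) c t'"
    then obtain p' e' where "t' = (p', e')" "TP x c p'" "TE e c e'"
      by (cases t') (simp add: join_def)
    then have "c = a" "t' = (x1, e1) \<or> stuck ?J t'"
      using x e by (auto simp: stuck_join_Pair)
    then show "\<exists>s'. ?J (y, e) c s' \<and> bisimilar ?J s' t'"
      using y e live by (auto simp: join_def stuck_bisimilar stuck_join_Pair)
  qed
qed

lemma ab_not_param_bisimilar_ab_plus_a:
  assumes "is_ab TP a b y" "is_ab_plus_a TP a b x" "TE e a e'" "TE e' b e''"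
  shows "\<not> param_bisimilar TP TE e y x"
proof
  obtain y1 y2 where y: "\<forall>c t. TP y c t \<longleftrightarrow> c = a \<and> t = y1" "\<forall>c t. TP y1 c t \<longleftrightarrow> c = b \<and> t = y2"
    "stuck TP y2"
    using assms(1) by (rule is_abE)
  obtain x1 x2 x3 where x: "\<forall>c t. TP x c t \<longleftrightarrow> c = a \<and> (t = x1 \<or> t = x3)"
    "\<forall>c t. TP x1 c t \<longleftrightarrow> c = b \<and> t = x2" "stuck TP x2" "stuck TP x3"
    using assms(2) by (rule is_ab_plus_aE)
  assume "param_bisimilar TP TE e y x"
  then have "param_bisimilar TP TE e x y"
    by (rule param_bisimilar_sym)
  moreover have "TP x a x3"
    using x by simp
  ultimately obtain y' where "TP y a y'" "param_bisimilar TP TE e' x3 y'"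
    using assms(3) by (blast elim: param_bisimilar_step)
  then have "param_bisimilar TP TE e' y1 x3"
    using y by (simp add: param_bisimilar_sym)
  moreover have "TP y1 b y2"
    using y by simp
  ultimately obtain x' where "TP x3 b x'"
    using assms(4) by (blast elim: param_bisimilar_step)
  with \<open>stuck TP x3\<close> show False
    by (simp add: stuck_def)
qed

lemma ab_not_ji_bisim_ab_plus_a:
  assumes "is_ab TP a b y" "is_ab_plus_a TP a b x" "is_ab TE a b e"
  shows "\<not> ji_bisim TP TE e y x"
proof
  obtain y1 y2 where y: "\<forall>c t. TP y c t \<longleftrightarrow> c = a \<and> t = y1" "\<forall>c t. TP y1 c t \<longleftrightarrow> c = b \<and> t = y2"
    "stuck TP y2"
    using assms(1) by (rule is_abE)
  obtain x1 x2 x3 where x: "\<forall>c t. TP x c t \<longleftrightarrow> c = a \<and> (t = x1 \<or> t = x3)"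
    "\<forall>c t. TP x1 c t \<longleftrightarrow> c = b \<and> t = x2" "stuck TP x2" "stuck TP x3"
    using assms(2) by (rule is_ab_plus_aE)
  obtain e1 e2 where e: "\<forall>c t. TE e c t \<longleftrightarrow> c = a \<and> t = e1" "\<forall>c t. TE e1 c t \<longleftrightarrow> c = b \<and> t = e2"
    "stuck TE e2"
    using assms(3) by (rule is_abE)
  let ?J = "join TP TE"
  assume "ji_bisim TP TE e y x"
  then have "bisimilar ?J (x, e) (y, e)"
    unfolding ji_bisim_def by (rule bisimilar_sym)
  moreover have "?J (x, e) a (x3, e1)"
    using x e by (simp add: join_def)
  ultimately obtain s' where "?J (y, e) a s'" "bisimilar ?J (x3, e1) s'"
    by (rule bisimilar_step)
  moreover have "s' = (y1, e1)"
    using \<open>?J (y, e) a s'\<close> y e by (auto simp: join_def prod_eq_iff)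
  ultimately have "bisimilar ?J (y1, e1) (x3, e1)"
    by (simp add: bisimilar_sym)
  moreover have "?J (y1, e1) b (y2, e2)"
    using y e by (simp add: join_def)
  ultimately obtain t' where "?J (x3, e1) b t'"
    by (rule bisimilar_step)
  with \<open>stuck TP x3\<close> show False
    by (simp add: stuck_def join_def)
qed

theorem proposition3p7:
  fixes TP :: "'p \<Rightarrow> 'a \<Rightarrow> 'p \<Rightarrow> bool"
    and TE :: "'e \<Rightarrow> 'a \<Rightarrow> 'e \<Rightarrow> bool"
  shows
    "(\<forall>e p q. param_bisimilar TP TE e p q \<longrightarrow> ji_bisim TP TE e p q)
     \<and> (\<forall>a b xp yp xe ye.
          a \<noteq> b \<and> is_ab_plus_a TP a b xp \<and> is_ab TP a b yp
          \<and> is_ab_plus_a TE a b xe \<and> is_ab TE a b ye \<longrightarrow>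
          ji_bisim TP TE xe yp xp \<and> \<not> param_bisimilar TP TE xe yp xp)
     \<and> (\<forall>e p q. ji_bisim TP TE e p q \<longrightarrow> ji_simeq TP TE e p q)
     \<and> (\<forall>a b xp yp xe ye.
          a \<noteq> b \<and> is_ab_plus_a TP a b xp \<and> is_ab TP a b yp
          \<and> is_ab_plus_a TE a b xe \<and> is_ab TE a b ye \<longrightarrow>
          ji_simeq TP TE ye yp xp \<and> \<not> ji_bisim TP TE ye yp xp)"
proof (intro conjI allI impI)
  fix e p q
  show "param_bisimilar TP TE e p q \<Longrightarrow> ji_bisim TP TE e p q"
    by (rule param_bisimilar_imp_ji_bisim)
  show "ji_bisim TP TE e p q \<Longrightarrow> ji_simeq TP TE e p q"
    by (rule ji_bisim_imp_ji_simeq)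
next
  fix a b xp yp xe ye
  assume "a \<noteq> b \<and> is_ab_plus_a TP a b xp \<and> is_ab TP a b yp
    \<and> is_ab_plus_a TE a b xe \<and> is_ab TE a b ye"
  then have xp: "is_ab_plus_a TP a b xp" and yp: "is_ab TP a b yp"
    and xe: "is_ab_plus_a TE a b xe" and ye: "is_ab TE a b ye"
    by auto
  obtain e1 e2 e3 where e: "\<forall>c t. TE xe c t \<longleftrightarrow> c = a \<and> (t = e1 \<or> t = e3)"
    "\<forall>c t. TE e1 c t \<longleftrightarrow> c = b \<and> t = e2" "stuck TE e2" "stuck TE e3"
    using xe by (rule is_ab_plus_aE)
  show "ji_bisim TP TE xe yp xp"
    using yp xp xe by (rule ab_ji_bisim_ab_plus_a)
  show "\<not> param_bisimilar TP TE xe yp xp"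
    by (rule ab_not_param_bisimilar_ab_plus_a[where e' = e1 and e'' = e2, OF yp xp]) (simp_all add: e)
  show "ji_simeq TP TE ye yp xp"
    unfolding ji_simeq_def
    using ab_simulatable_ab_plus_a[OF yp xp] ab_plus_a_simulatable_ab[OF xp yp]
    by (blast intro: simulatable_imp_ji_sim)
  show "\<not> ji_bisim TP TE ye yp xp"
    using yp xp ye by (rule ab_not_ji_bisim_ab_plus_a)
qed

end
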